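(* Fix an integer $N \ge 1$ and any $R < \ln 2$. For each $L$, let $M = M(L) = \lceil 2^{L R/N} \rceil$ and let $K = K(L)$ be positive integers with $\lim_{L\to\infty} NK/L = \ln 2$. Draw a random codebook consisting of independent Bloom filters $B_{n,m} \sim \mathsf{BF}(L,K)$, $n = 1,\dots,N$, $m = 1,\dots,M$. Let the messages $U_1,\dots,U_N$ be independent and uniform on $\{1,\dots,M\}$, independent of the codebook; user $n$ transmits $\underline{x}_n = B_{n,U_n}$, and the receiver observes $\underline{y} = \underline{x}_1 \vee \cdots \vee \underline{x}_N$ (componentwise OR). The receiver decodes each user separately: for each $n$, if there is exactly one $m$ such that $B_{n,m}$ is contained in $\underline{y}$ (i.e., $B_{n,m} \le \underline{y}$ componentwise), it outputs $\hat{U}_n = m$; otherwise it declares an error. Then the probability (over codebook and messages) that $\hat{U}_n = U_n$ for all $n$ tends to $1$ as $L \to \infty$. Consequently, without joint decoding, Bloom filter channel inputs achieve the symmetric sum rate $\ln 2$ bits per channel use on the $N$-user OR multiple-access channel, for any fixed $N$.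
   Context: The $N$-user OR multiple-access channel has binary inputs and output equal to their Boolean OR, used memorylessly; here a block of $L$ channel uses carries one length-$L$ array per user. A Bloom filter $\mathsf{BF}(L, K)$ is the random binary array in $\{0,1\}^L$ obtained by starting from the all-zero array and letting $K$ hash functions each independently select a uniformly random position in $\{1,\dots,L\}$ and set it to $1$. The sum rate is $N \log_2 M / L$ bits per channel use, each user having rate $\log_2 M / L$. *)

theory Defs
  imports "HOL-Probability.Probability"
begin

text \<open>Binary arrays of length L are represented by the set of positions (in
  {0..<L}) carrying a 1.  Componentwise OR is union, componentwise
  order (containment) is subset.\<close>

definition bloom_filter :: "nat \<Rightarrow> nat \<Rightarrow> nat set pmf" where
  "bloom_filter L K =
     map_pmf (\<lambda>h. h ` {..<K}) (Pi_pmf {..<K} 0 (\<lambda>_. pmf_of_set {..<L}))"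

definition bloom_codebook :: "nat \<Rightarrow> nat \<Rightarrow> nat \<Rightarrow> nat \<Rightarrow> (nat \<times> nat \<Rightarrow> nat set) pmf" where
  "bloom_codebook N M L K = Pi_pmf ({..<N} \<times> {..<M}) {} (\<lambda>_. bloom_filter L K)"

definition message_dist :: "nat \<Rightarrow> nat \<Rightarrow> (nat \<Rightarrow> nat) pmf" where
  "message_dist N M = Pi_pmf {..<N} 0 (\<lambda>_. pmf_of_set {..<M})"

definition or_output :: "nat \<Rightarrow> (nat \<times> nat \<Rightarrow> nat set) \<Rightarrow> (nat \<Rightarrow> nat) \<Rightarrow> nat set" where
  "or_output N C U = (\<Union>n\<in>{..<N}. C (n, U n))"

definition decodes_correctly :: "nat \<Rightarrow> (nat \<times> nat \<Rightarrow> nat set) \<Rightarrow> nat set \<Rightarrow> nat \<Rightarrow> nat \<Rightarrow> bool" where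
  "decodes_correctly M C y n u \<longleftrightarrow> {m \<in> {..<M}. C (n, m) \<subseteq> y} = {u}"

definition success_prob :: "nat \<Rightarrow> nat \<Rightarrow> nat \<Rightarrow> nat \<Rightarrow> real" where
  "success_prob N M L K =
     measure_pmf.prob (pair_pmf (bloom_codebook N M L K) (message_dist N M))
       {(C, U). \<forall>n<N. decodes_correctly M C (or_output N C U) n (U n)}"

end

theory Submission
  imports Defs "HOL-Real_Asymp.Real_Asymp"
begin

text \<open>With \<open>K \<approx> L ln 2 / N\<close> hash positions per codeword, each of the \<open>L\<close> positions of the
  channel output is still 0 with probability \<open>((L-1)/L)^(KN) \<rightarrow> 1/2\<close>. The number of zeros is a
  sum of indicators whose pairwise correlations are negative, so by Chebyshev's inequality the output
  has, with high probability, at most a fraction \<open>a\<close> of ones, for any fixed \<open>a > 1/2\<close>. A wrong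
  codeword is independent of the output, hence contained in it with probability at most \<open>a^K\<close>;
  a union bound over the fewer than \<open>NM\<close> wrong codewords gives an error probability of order
  \<open>N 2^(LR/N) a^K = exp ((L ln 2 / N) (R + ln a) + o(L))\<close>, which vanishes when \<open>a < exp (-R)\<close>.
  Such an \<open>a > 1/2\<close> exists precisely because \<open>R < ln 2\<close>.\<close>

abbreviation bloom_family :: "'i set \<Rightarrow> nat \<Rightarrow> nat \<Rightarrow> ('i \<Rightarrow> nat set) pmf" where
  "bloom_family I L K \<equiv> Pi_pmf I {} (\<lambda>_. bloom_filter L K)"

definition avoiding :: "'i set \<Rightarrow> nat set \<Rightarrow> ('i \<Rightarrow> nat set) set" where
  "avoiding S X = {C. \<forall>s\<in>S. C s \<inter> X = {}}"

definition uncovered :: "nat \<Rightarrow> 'i set \<Rightarrow> ('i \<Rightarrow> nat set) \<Rightarrow> nat set" where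
  "uncovered L S C = {..<L} - (\<Union>s\<in>S. C s)"

lemma prob_bloom_filter_subset:
  assumes "L > 0"
  shows "measure_pmf.prob (bloom_filter L K) {B. B \<subseteq> W} = (real (card ({..<L} \<inter> W)) / real L) ^ K"
proof -
  have "(\<lambda>h. h ` {..<K}) -` {B. B \<subseteq> W} = Pi {..<K} (\<lambda>_. W)" by auto
  then show ?thesis using assms
    by (simp add: bloom_filter_def measure_Pi_pmf_Pi measure_pmf_of_set[of "{..<L}"] lessThan_empty_iff)
qed

lemma prob_bloom_family_avoiding:
  assumes "finite I" "S \<subseteq> I" "L > 0"
  shows "measure_pmf.prob (bloom_family I L K) (avoiding S X)
       = (real (card ({..<L} - X)) / real L) ^ (K * card S)"
proof -
  have "avoiding S X = Pi I (\<lambda>i. if i \<in> S then {B. B \<subseteq> -X} else UNIV)"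
    using assms(2) by (auto simp: avoiding_def Pi_def)
  then have "measure_pmf.prob (bloom_family I L K) (avoiding S X)
     = (\<Prod>i\<in>I. measure_pmf.prob (bloom_filter L K) (if i \<in> S then {B. B \<subseteq> -X} else UNIV))"
    using assms(1) by (simp add: measure_Pi_pmf_Pi)
  also have "\<dots> = (\<Prod>i\<in>I. if i \<in> S then (real (card ({..<L} - X)) / real L) ^ K else 1)"
    using assms(3) by (intro prod.cong) (auto simp: prob_bloom_filter_subset Diff_eq)
  also have "\<dots> = ((real (card ({..<L} - X)) / real L) ^ K) ^ card S"
    using assms(1,2) by (simp add: prod.If_cases Int_absorb1)
  finally show ?thesis by (simp add: power_mult)
qed

lemma card_uncovered_eq_sum_indicator:
  "real (card (uncovered L S C)) = (\<Sum>x<L. indicator (avoiding S {x}) C)"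
proof -
  have "uncovered L S C = {..<L} \<inter> {x. C \<in> avoiding S {x}}"
    by (auto simp: uncovered_def avoiding_def)
  then show ?thesis by (simp add: indicator_def sum.If_cases)
qed

lemma card_uncovered_sq_eq_sum_indicator:
  "real (card (uncovered L S C)) ^ 2 = (\<Sum>x<L. \<Sum>y<L. indicator (avoiding S {x, y}) C)"
proof -
  have "real (card (uncovered L S C)) ^ 2
      = (\<Sum>x<L. \<Sum>y<L. indicator (avoiding S {x}) C * indicator (avoiding S {y}) C)"
    unfolding card_uncovered_eq_sum_indicator power2_eq_square sum_product ..
  also have "\<dots> = (\<Sum>x<L. \<Sum>y<L. indicator (avoiding S {x, y}) C)"
    by (intro sum.cong refl) (auto simp: indicator_def avoiding_def)
  finally show ?thesis .
qed

lemma integrable_measure_pmf_indicator [simp]: "integrable (measure_pmf p) (indicator A :: 'a \<Rightarrow> real)"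
  by (simp add: less_top[symmetric])

lemma expectation_card_uncovered:
  assumes "finite I" "S \<subseteq> I" "L > 0"
  shows "measure_pmf.expectation (bloom_family I L K) (\<lambda>C. real (card (uncovered L S C)))
       = real L * (real (L - 1) / real L) ^ (K * card S)"
proof -
  have "measure_pmf.expectation (bloom_family I L K) (\<lambda>C. real (card (uncovered L S C)))
      = (\<Sum>x<L. measure_pmf.prob (bloom_family I L K) (avoiding S {x}))"
    unfolding card_uncovered_eq_sum_indicator by simp
  also have "\<dots> = (\<Sum>x<L. (real (L - 1) / real L) ^ (K * card S))"
    using assms by (intro sum.cong) (auto simp: prob_bloom_family_avoiding)
  finally show ?thesis by (simp only: sum_constant card_lessThan)
qed

lemma expectation_card_uncovered_sq_le:
  assumes "finite I" "S \<subseteq> I" "L > 0"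
  shows "measure_pmf.expectation (bloom_family I L K) (\<lambda>C. real (card (uncovered L S C)) ^ 2)
       \<le> real L * (real (L - 1) / real L) ^ (K * card S) + real L ^ 2 * (real (L - 2) / real L) ^ (K * card S)"
proof -
  let ?P = "bloom_family I L K"
  let ?p1 = "(real (L - 1) / real L) ^ (K * card S)" and ?p2 = "(real (L - 2) / real L) ^ (K * card S)"
  have row: "(\<Sum>y<L. measure_pmf.prob ?P (avoiding S {x, y})) \<le> ?p1 + real L * ?p2" if x: "x < L" for x
  proof -
    have "(\<Sum>y<L. measure_pmf.prob ?P (avoiding S {x, y}))
        = measure_pmf.prob ?P (avoiding S {x}) + (\<Sum>y\<in>{..<L} - {x}. measure_pmf.prob ?P (avoiding S {x, y}))"
      using x by (subst sum.remove[of _ x]) auto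
    also have "\<dots> = ?p1 + (\<Sum>y\<in>{..<L} - {x}. ?p2)"
    proof (intro arg_cong2[where f="(+)"] sum.cong refl)
      show "measure_pmf.prob ?P (avoiding S {x}) = ?p1"
        using x assms by (simp add: prob_bloom_family_avoiding)
      fix y assume y: "y \<in> {..<L} - {x}"
      have "{..<L} - {x, y} = ({..<L} - {x}) - {y}" by auto
      then have "card ({..<L} - {x, y}) = L - 2"
        using x y by (simp add: card_Diff_singleton)
      then show "measure_pmf.prob ?P (avoiding S {x, y}) = ?p2"
        using assms by (simp add: prob_bloom_family_avoiding)
    qed
    also have "\<dots> \<le> ?p1 + real L * ?p2"
      by (simp only: sum_constant) (intro add_left_mono mult_right_mono, auto simp: card_Diff_singleton_if)
    finally show ?thesis .
  qed
  have "measure_pmf.expectation ?P (\<lambda>C. real (card (uncovered L S C)) ^ 2)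
      = (\<Sum>x<L. \<Sum>y<L. measure_pmf.prob ?P (avoiding S {x, y}))"
    unfolding card_uncovered_sq_eq_sum_indicator by simp
  also have "\<dots> \<le> (\<Sum>x<L. ?p1 + real L * ?p2)"
    using row by (intro sum_mono) auto
  also have "\<dots> = real L * ?p1 + real L ^ 2 * ?p2"
    by (simp only: sum_constant card_lessThan power2_eq_square distrib_left mult.assoc)
  finally show ?thesis .
qed

lemma diff_two_div_le_diff_one_div_sq: "real (L - 2) / real L \<le> (real (L - 1) / real L) ^ 2"
  by (cases "L \<ge> 2") (auto simp: field_simps power2_eq_square of_nat_diff)

lemma variance_card_uncovered_le:
  assumes "finite I" "S \<subseteq> I" "L > 0"
  shows "measure_pmf.variance (bloom_family I L K) (\<lambda>C. real (card (uncovered L S C))) \<le> real L"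
proof -
  let ?P = "bloom_family I L K" and ?Z = "\<lambda>C. real (card (uncovered L S C))"
  let ?p1 = "(real (L - 1) / real L) ^ (K * card S)" and ?p2 = "(real (L - 2) / real L) ^ (K * card S)"
  have "integrable ?P ?Z"
    unfolding card_uncovered_eq_sum_indicator by simp
  moreover have "integrable ?P (\<lambda>C. ?Z C ^ 2)"
    unfolding card_uncovered_sq_eq_sum_indicator by simp
  ultimately have "measure_pmf.variance ?P ?Z = measure_pmf.expectation ?P (\<lambda>C. ?Z C ^ 2) - (real L * ?p1) ^ 2"
    by (subst measure_pmf.variance_eq) (simp_all only: expectation_card_uncovered[OF assms])
  also have "\<dots> \<le> real L * ?p1 + real L ^ 2 * ?p2 - (real L * ?p1) ^ 2"
    using expectation_card_uncovered_sq_le[OF assms] by simp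
  also have "\<dots> \<le> real L * ?p1"
  proof -
    have "?p2 \<le> ((real (L - 1) / real L) ^ 2) ^ (K * card S)"
      using diff_two_div_le_diff_one_div_sq[of L] by (intro power_mono) auto
    then have "?p2 \<le> ?p1 ^ 2"
      by (metis power_mult mult.commute)
    then show ?thesis by (simp add: power_mult_distrib mult_left_mono)
  qed
  also have "\<dots> \<le> real L"
    by (intro mult_left_le power_le_one) (auto simp: divide_le_eq_1)
  finally show ?thesis .
qed

lemma prob_card_uncovered_deviation_le:
  assumes "finite I" "S \<subseteq> I" "L > 0" "t > 0"
  shows "measure_pmf.prob (bloom_family I L K)
           {C. t \<le> \<bar>real (card (uncovered L S C)) - real L * (real (L - 1) / real L) ^ (K * card S)\<bar>}
         \<le> real L / t ^ 2"
proof -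
  let ?P = "bloom_family I L K" and ?Z = "\<lambda>C. real (card (uncovered L S C))"
  have "integrable ?P (\<lambda>C. ?Z C ^ 2)"
    unfolding card_uncovered_sq_eq_sum_indicator by simp
  then have "measure_pmf.prob ?P {C \<in> space ?P. t \<le> \<bar>?Z C - measure_pmf.expectation ?P ?Z\<bar>}
      \<le> measure_pmf.variance ?P ?Z / t ^ 2"
    using assms(4) by (intro measure_pmf.Chebyshev_inequality) auto
  also have "\<dots> \<le> real L / t ^ 2"
    using variance_card_uncovered_le[OF assms(1-3)] by (simp add: divide_right_mono)
  finally show ?thesis
    using assms by (simp add: expectation_card_uncovered)
qed

lemma prob_pair_pmf_le_sections:
  fixes c :: real
  assumes "\<And>y. y \<in> set_pmf q \<Longrightarrow> measure_pmf.prob p {x. (x, y) \<in> E} \<le> c"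
  shows "measure_pmf.prob (pair_pmf p q) E \<le> c"
proof -
  obtain y0 where "y0 \<in> set_pmf q" using set_pmf_not_empty[of q] by blast
  then have c0: "0 \<le> c" using assms[of y0] measure_nonneg order_trans by metis
  have "pair_pmf p q = bind_pmf q (\<lambda>y. map_pmf (\<lambda>x. (x, y)) p)"
    unfolding pair_pmf_def map_pmf_def by (subst bind_commute_pmf) (simp add: o_def)
  then have "emeasure (measure_pmf (pair_pmf p q)) E
      = (\<integral>\<^sup>+y. emeasure (measure_pmf p) {x. (x, y) \<in> E} \<partial>q)"
    by (simp add: vimage_def)
  also have "\<dots> \<le> (\<integral>\<^sup>+y. ennreal c \<partial>q)"
    using assms by (intro nn_integral_mono_AE AE_pmfI) (simp add: measure_pmf.emeasure_eq_measure ennreal_leI)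
  finally show ?thesis
    using c0 by (simp add: measure_pmf.emeasure_eq_measure)
qed

lemma card_covered_add_card_uncovered:
  "card ({..<L} \<inter> (\<Union>s\<in>S. C s)) + card (uncovered L S C) = L"
  using card_Int_Diff[of "{..<L}" "\<Union>s\<in>S. C s"] by (simp add: uncovered_def Diff_eq)

lemma prob_codeword_covered_le:
  assumes "finite I" "j \<in> I" "S \<subseteq> I - {j}" "L > 0" "0 \<le> a"
  shows "measure_pmf.prob (bloom_family I L K)
           {C. C j \<subseteq> (\<Union>s\<in>S. C s) \<and> (1 - a) * real L \<le> real (card (uncovered L S C))} \<le> a ^ K"
proof -
  \<comment> \<open>\<open>C j\<close> is independent of the other codewords, so condition on them.\<close>
  have split_j: "bloom_family I L K = map_pmf (\<lambda>(y, f). f(j := y))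
      (pair_pmf (bloom_filter L K) (bloom_family (I - {j}) L K))"
    using assms(1,2) Pi_pmf_insert[of "I - {j}" j "{}" "\<lambda>_. bloom_filter L K"]
    by (simp add: insert_absorb)
  show ?thesis unfolding split_j measure_map_pmf
  proof (rule prob_pair_pmf_le_sections)
    fix f :: "'a \<Rightarrow> nat set"
    let ?W = "\<Union>s\<in>S. f s"
    have "(f(j := y)) ` S = f ` S" for y
      using assms(3) by (intro image_cong) auto
    then have "{y. (y, f) \<in> (\<lambda>(y, f). f(j := y)) -`
            {C. C j \<subseteq> (\<Union>s\<in>S. C s) \<and> (1 - a) * real L \<le> real (card (uncovered L S C))}}
        = {y. y \<subseteq> ?W \<and> (1 - a) * real L \<le> real (card (uncovered L S f))}"
      by (simp add: uncovered_def)
    also have "measure_pmf.prob (bloom_filter L K) \<dots> \<le> a ^ K"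
    proof (cases "(1 - a) * real L \<le> real (card (uncovered L S f))")
      case True
      then have "real (card ({..<L} \<inter> ?W)) \<le> a * real L"
        using card_covered_add_card_uncovered[where L=L and S=S and C=f] by (simp add: algebra_simps flip: of_nat_add)
      then have "(real (card ({..<L} \<inter> ?W)) / real L) ^ K \<le> a ^ K"
        using assms(4) by (intro power_mono) (auto simp: field_simps)
      with True show ?thesis
        using assms(4) by (simp add: prob_bloom_filter_subset)
    qed (use assms(5) in simp)
    finally show "measure_pmf.prob (bloom_filter L K) {y. (y, f) \<in> (\<lambda>(y, f). f(j := y)) -`
            {C. C j \<subseteq> (\<Union>s\<in>S. C s) \<and> (1 - a) * real L \<le> real (card (uncovered L S C))}} \<le> a ^ K" .
  qed
qed

lemma decoding_error_subset:
  fixes u :: "nat \<Rightarrow> nat" and t :: real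
  assumes u: "\<forall>n<N. u n < M"
  defines "S \<equiv> (\<lambda>n. (n, u n)) ` {..<N}"
  shows "{C. \<not> (\<forall>n<N. decodes_correctly M C (or_output N C u) n (u n))}
    \<subseteq> (\<Union>j\<in>{..<N} \<times> {..<M} - S. {C. C j \<subseteq> (\<Union>s\<in>S. C s) \<and> t \<le> real (card (uncovered L S C))})
        \<union> {C. real (card (uncovered L S C)) < t}"
proof
  fix C assume "C \<in> {C. \<not> (\<forall>n<N. decodes_correctly M C (or_output N C u) n (u n))}"
  then obtain n where n: "n < N" and wrong: "\<not> decodes_correctly M C (or_output N C u) n (u n)"
    by blast
  have or_output_eq: "or_output N C u = (\<Union>s\<in>S. C s)"
    by (auto simp: or_output_def S_def)
  have "u n \<in> {m \<in> {..<M}. C (n, m) \<subseteq> or_output N C u}"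
    using n u by (auto simp: or_output_def)
  then obtain m where "m < M" "m \<noteq> u n" "C (n, m) \<subseteq> (\<Union>s\<in>S. C s)"
    using wrong unfolding decodes_correctly_def or_output_eq by blast
  with n show "C \<in> (\<Union>j\<in>{..<N} \<times> {..<M} - S. {C. C j \<subseteq> (\<Union>s\<in>S. C s) \<and> t \<le> real (card (uncovered L S C))})
        \<union> {C. real (card (uncovered L S C)) < t}"
    by (cases "real (card (uncovered L S C)) < t") (auto simp: S_def intro!: bexI[of _ "(n, m)"])
qed

lemma prob_card_uncovered_less_le:
  fixes a \<delta> :: real
  assumes "finite I" "S \<subseteq> I" "L > 0" "\<delta> > 0"
    and \<delta>: "\<delta> \<le> (real (L - 1) / real L) ^ (K * card S) - (1 - a)"
  shows "measure_pmf.prob (bloom_family I L K) {C. real (card (uncovered L S C)) < (1 - a) * real L}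
         \<le> 1 / (\<delta> ^ 2 * real L)"
proof -
  let ?Z = "\<lambda>C. real (card (uncovered L S C))" and ?p1 = "(real (L - 1) / real L) ^ (K * card S)"
  have \<delta>L: "\<delta> * real L \<le> real L * ?p1 - (1 - a) * real L"
    using mult_right_mono[OF \<delta>, of "real L"] by (simp add: algebra_simps)
  have "{C. ?Z C < (1 - a) * real L} \<subseteq> {C. \<delta> * real L \<le> \<bar>?Z C - real L * ?p1\<bar>}"
  proof
    fix C assume "C \<in> {C. ?Z C < (1 - a) * real L}"
    then show "C \<in> {C. \<delta> * real L \<le> \<bar>?Z C - real L * ?p1\<bar>}"
      using \<delta>L abs_ge_minus_self[of "?Z C - real L * ?p1"] by simp
  qed
  then have "measure_pmf.prob (bloom_family I L K) {C. ?Z C < (1 - a) * real L}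
      \<le> measure_pmf.prob (bloom_family I L K) {C. \<delta> * real L \<le> \<bar>?Z C - real L * ?p1\<bar>}"
    by (rule measure_pmf.finite_measure_mono) simp
  also have "\<dots> \<le> real L / (\<delta> * real L) ^ 2"
    using assms by (intro prob_card_uncovered_deviation_le) simp_all
  also have "\<dots> = 1 / (\<delta> ^ 2 * real L)"
    using assms(3) by (simp add: power2_eq_square)
  finally show ?thesis .
qed

lemma prob_spurious_codeword_le:
  fixes a :: real
  assumes "finite I" "S \<subseteq> I" "L > 0" "0 \<le> a"
  shows "measure_pmf.prob (bloom_family I L K)
           (\<Union>j\<in>I - S. {C. C j \<subseteq> (\<Union>s\<in>S. C s) \<and> (1 - a) * real L \<le> real (card (uncovered L S C))})
         \<le> real (card (I - S)) * a ^ K"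
proof -
  have "measure_pmf.prob (bloom_family I L K)
           (\<Union>j\<in>I - S. {C. C j \<subseteq> (\<Union>s\<in>S. C s) \<and> (1 - a) * real L \<le> real (card (uncovered L S C))})
      \<le> (\<Sum>j\<in>I - S. measure_pmf.prob (bloom_family I L K)
           {C. C j \<subseteq> (\<Union>s\<in>S. C s) \<and> (1 - a) * real L \<le> real (card (uncovered L S C))})"
    by (rule measure_pmf.finite_measure_subadditive_finite) (use assms(1) in simp_all)
  also have "\<dots> \<le> (\<Sum>j\<in>I - S. a ^ K)"
    using assms by (intro sum_mono prob_codeword_covered_le) auto
  finally show ?thesis by simp
qed

lemma prob_decoding_error_le:
  fixes u :: "nat \<Rightarrow> nat" and a \<delta> :: real
  assumes u: "\<forall>n<N. u n < M" and "L > 0" "0 \<le> a" "\<delta> > 0"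
    and "\<delta> \<le> (real (L - 1) / real L) ^ (K * N) - (1 - a)"
  shows "measure_pmf.prob (bloom_codebook N M L K)
           {C. \<not> (\<forall>n<N. decodes_correctly M C (or_output N C u) n (u n))}
         \<le> 1 / (\<delta> ^ 2 * real L) + real N * real M * a ^ K"
proof -
  define I where "I = {..<N} \<times> {..<M}"
  define S where "S = (\<lambda>n. (n, u n)) ` {..<N}"
  let ?P = "bloom_family I L K" and ?Z = "\<lambda>C. real (card (uncovered L S C))"
  let ?Spurious = "\<Union>j\<in>I - S. {C. C j \<subseteq> (\<Union>s\<in>S. C s) \<and> (1 - a) * real L \<le> ?Z C}"
  have fin: "finite I" and SI: "S \<subseteq> I" and card_S: "card S = N"
    using u by (auto simp: I_def S_def card_image inj_on_def)
  have "bloom_codebook N M L K = ?P"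
    by (simp add: bloom_codebook_def I_def)
  moreover have "{C. \<not> (\<forall>n<N. decodes_correctly M C (or_output N C u) n (u n))}
      \<subseteq> ?Spurious \<union> {C. ?Z C < (1 - a) * real L}"
    using decoding_error_subset[OF u] unfolding I_def S_def by blast
  then have "measure_pmf.prob ?P {C. \<not> (\<forall>n<N. decodes_correctly M C (or_output N C u) n (u n))}
      \<le> measure_pmf.prob ?P ?Spurious + measure_pmf.prob ?P {C. ?Z C < (1 - a) * real L}"
    by (intro order_trans[OF measure_pmf.finite_measure_mono measure_Un_le]) simp_all
  moreover have "measure_pmf.prob ?P ?Spurious \<le> real N * real M * a ^ K"
  proof -
    have "card (I - S) \<le> N * M"
      using card_mono[OF fin, of "I - S"] by (simp add: I_def card_cartesian_product)
    then have "real (card (I - S)) * a ^ K \<le> real N * real M * a ^ K"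
      using assms(3) by (intro mult_right_mono) (auto simp flip: of_nat_mult)
    then show ?thesis
      using prob_spurious_codeword_le[OF fin SI assms(2,3), of K] by linarith
  qed
  moreover have "measure_pmf.prob ?P {C. ?Z C < (1 - a) * real L} \<le> 1 / (\<delta> ^ 2 * real L)"
    using assms(2,4,5) fin SI by (intro prob_card_uncovered_less_le) (simp_all add: card_S)
  ultimately show ?thesis by simp
qed

lemma message_dist_less:
  assumes "u \<in> set_pmf (message_dist N M)" "M > 0" "n < N"
  shows "u n < M"
proof -
  have "u \<in> PiE_dflt {..<N} 0 (\<lambda>_. set_pmf (pmf_of_set {..<M}))"
    using assms(1) set_Pi_pmf_subset'[of "{..<N}" 0 "\<lambda>_. pmf_of_set {..<M}"]
    by (auto simp: message_dist_def)
  then show ?thesis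
    using assms(2,3) by (auto simp: PiE_dflt_def lessThan_empty_iff)
qed

lemma success_prob_ge:
  fixes a \<delta> :: real
  assumes "M > 0" "L > 0" "0 \<le> a" "\<delta> > 0"
    and "\<delta> \<le> (real (L - 1) / real L) ^ (K * N) - (1 - a)"
  shows "1 - (1 / (\<delta> ^ 2 * real L) + real N * real M * a ^ K) \<le> success_prob N M L K"
proof -
  let ?E = "{(C, U). \<forall>n<N. decodes_correctly M C (or_output N C U) n (U n)}"
  have "1 - success_prob N M L K = measure_pmf.prob (pair_pmf (bloom_codebook N M L K) (message_dist N M)) (- ?E)"
    unfolding success_prob_def by (simp add: measure_pmf.prob_compl[symmetric] Compl_eq_Diff_UNIV)
  also have "\<dots> \<le> 1 / (\<delta> ^ 2 * real L) + real N * real M * a ^ K"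
  proof (rule prob_pair_pmf_le_sections)
    fix u assume "u \<in> set_pmf (message_dist N M)"
    then have "\<forall>n<N. u n < M"
      using assms(1) message_dist_less by blast
    then show "measure_pmf.prob (bloom_codebook N M L K) {C. (C, u) \<in> - ?E}
        \<le> 1 / (\<delta> ^ 2 * real L) + real N * real M * a ^ K"
      using prob_decoding_error_le[of N u M L a \<delta> K] assms(2-5) by simp
  qed
  finally show ?thesis by simp
qed

lemma power_diff_one_div_tendsto_exp:
  fixes T :: "nat \<Rightarrow> nat"
  assumes "(\<lambda>L. real (T L) / real L) \<longlonglongrightarrow> c"
  shows "(\<lambda>L. (real (L - 1) / real L) ^ T L) \<longlonglongrightarrow> exp (- c)"
proof -
  have "(\<lambda>L. real L * ln (1 - 1 / real L)) \<longlonglongrightarrow> -1" by real_asymp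
  then have "(\<lambda>L. exp (real (T L) / real L * (real L * ln (1 - 1 / real L)))) \<longlonglongrightarrow> exp (c * -1)"
    by (intro tendsto_intros assms)
  moreover have "eventually (\<lambda>L. exp (real (T L) / real L * (real L * ln (1 - 1 / real L)))
      = (real (L - 1) / real L) ^ T L) sequentially"
    using eventually_ge_at_top[of 2]
  proof eventually_elim
    case (elim L)
    then have pos: "0 < 1 - 1 / real L" and eq: "1 - 1 / real L = real (L - 1) / real L"
      by (simp_all add: field_simps of_nat_diff)
    have "exp (real (T L) / real L * (real L * ln (1 - 1 / real L))) = exp (real (T L) * ln (1 - 1 / real L))"
      using elim by simp
    also have "\<dots> = (1 - 1 / real L) ^ T L"
      using pos by (simp add: exp_ln ln_realpow[symmetric])
    finally show ?case by (simp only: eq)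
  qed
  ultimately show ?thesis using Lim_transform_eventually by fastforce
qed

lemma exp_mult_tendsto_zero:
  fixes c :: "nat \<Rightarrow> real"
  assumes "c \<longlonglongrightarrow> c0" "c0 < 0"
  shows "(\<lambda>L. exp (real L * c L)) \<longlonglongrightarrow> 0"
proof (rule tendsto_sandwich[where f="\<lambda>_. 0" and h="\<lambda>L. exp (real L * (c0 / 2))"])
  have "eventually (\<lambda>L. c L < c0 / 2) sequentially"
    using order_tendstoD(2)[OF assms(1), of "c0 / 2"] assms(2) by simp
  then show "eventually (\<lambda>L. exp (real L * c L) \<le> exp (real L * (c0 / 2))) sequentially"
  proof eventually_elim
    case (elim L)
    then have "real L * c L \<le> real L * (c0 / 2)" by (intro mult_left_mono) auto
    then show ?case by simp
  qed
  show "(\<lambda>L. exp (real L * (c0 / 2))) \<longlonglongrightarrow> 0"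
    using assms(2) by real_asymp
qed simp_all

lemma codeword_count_mult_power_tendsto_zero:
  fixes M K :: "nat \<Rightarrow> nat" and R a :: real
  assumes "N > 0" "0 < a" "a < 1" "ln a < - R"
    and M: "\<And>L. real (M L) \<le> 2 powr (real L * R / real N) + 1"
    and K: "(\<lambda>L. real N * real (K L) / real L) \<longlonglongrightarrow> ln 2"
  shows "(\<lambda>L. real N * real (M L) * a ^ K L) \<longlonglongrightarrow> 0"
proof -
  define c where "c L = real N * real (K L) / real L * ln a / real N" for L
  have c: "c \<longlonglongrightarrow> ln 2 * ln a / real N"
    unfolding c_def by (intro tendsto_intros K) (use assms(1) in simp)
  have "ln 2 * (R + ln a) / real N < 0" "ln 2 * ln a / real N < 0"
    using assms(1-4) by (auto intro!: divide_neg_pos mult_pos_neg)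
  then have "R * ln 2 / real N + ln 2 * ln a / real N < 0" "ln 2 * ln a / real N < 0"
    by (simp_all add: distrib_right add_divide_distrib mult.commute)
  then have "(\<lambda>L. exp (real L * (R * ln 2 / real N + c L))) \<longlonglongrightarrow> 0"
    and "(\<lambda>L. exp (real L * c L)) \<longlonglongrightarrow> 0"
    using c by (auto intro!: exp_mult_tendsto_zero tendsto_intros)
  then have upper_lim: "(\<lambda>L. real N * (exp (real L * (R * ln 2 / real N + c L)) + exp (real L * c L))) \<longlonglongrightarrow> 0"
    using tendsto_add tendsto_mult_right_zero by fastforce
  have upper: "eventually (\<lambda>L. real N * real (M L) * a ^ K L
      \<le> real N * (exp (real L * (R * ln 2 / real N + c L)) + exp (real L * c L))) sequentially"
    using eventually_gt_at_top[of 0]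
  proof eventually_elim
    case (elim L)
    then have "real L * c L = real (K L) * ln a"
      using assms(1) by (simp add: c_def)
    moreover have "a ^ K L = exp (real (K L) * ln a)"
      using assms(2) by (simp add: exp_of_nat_mult)
    ultimately have "a ^ K L = exp (real L * c L)" and
      "2 powr (real L * R / real N) * a ^ K L = exp (real L * (R * ln 2 / real N + c L))"
      by (simp_all add: powr_def exp_add distrib_left)
    then have "real (M L) * a ^ K L \<le> exp (real L * (R * ln 2 / real N + c L)) + exp (real L * c L)"
      using mult_right_mono[OF M, of "a ^ K L" L] assms(2) by (simp add: distrib_right)
    then show ?case
      using assms(1) by (subst mult.assoc) (intro mult_left_mono, simp_all)
  qed
  have "eventually (\<lambda>L. 0 \<le> real N * real (M L) * a ^ K L) sequentially"
    using assms(2) by simp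
  from tendsto_sandwich[OF this upper tendsto_const upper_lim] show ?thesis .
qed

lemma eventually_success_prob_ge:
  fixes M K :: "nat \<Rightarrow> nat" and a \<delta> :: real
  assumes "0 < \<delta>" "\<delta> < a - 1 / 2" and M: "\<And>L. M L > 0"
    and K: "(\<lambda>L. real N * real (K L) / real L) \<longlonglongrightarrow> ln 2"
  shows "eventually (\<lambda>L. 1 - (1 / (\<delta> ^ 2 * real L) + real N * real (M L) * a ^ K L)
           \<le> success_prob N (M L) L (K L)) sequentially"
proof -
  have "(\<lambda>L. (real (L - 1) / real L) ^ (K L * N)) \<longlonglongrightarrow> exp (- ln 2)"
    using K by (intro power_diff_one_div_tendsto_exp) (simp add: mult.commute)
  then have "eventually (\<lambda>L. 1 - a + \<delta> < (real (L - 1) / real L) ^ (K L * N)) sequentially"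
    using assms(2) by (intro order_tendstoD(1)) (simp add: exp_minus, linarith)
  then show ?thesis
    using eventually_gt_at_top[of 0]
  proof eventually_elim
    case (elim L)
    then have "\<delta> \<le> (real (L - 1) / real L) ^ (K L * N) - (1 - a)"
      by linarith
    with elim show ?case
      using assms(1,2) M by (intro success_prob_ge) auto
  qed
qed

theorem proposition2:
  fixes N :: nat and R :: real and M K :: "nat \<Rightarrow> nat"
  assumes "N \<ge> 1"
    and "R < ln 2"
    and "\<And>L. M L = nat \<lceil>2 powr (real L * R / real N)\<rceil>"
    and "\<And>L. K L > 0"
    and "(\<lambda>L. real N * real (K L) / real L) \<longlonglongrightarrow> ln 2"
  shows "(\<lambda>L. success_prob N (M L) L (K L)) \<longlonglongrightarrow> 1"
proof -
  have "1 / 2 < min 1 (exp (- R))"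
    using assms(2) exp_less_cancel_iff[of "- ln 2" "- R"] by (simp add: exp_minus)
  then obtain a where a: "1 / 2 < a" "a < min 1 (exp (- R))"
    using dense by blast
  then have ln_a: "ln a < - R"
    using ln_less_cancel_iff[of a "exp (- R)"] by simp
  define \<delta> where "\<delta> = (a - 1 / 2) / 2"
  define err where "err L = 1 / (\<delta> ^ 2 * real L) + real N * real (M L) * a ^ K L" for L
  have M_le: "real (M L) \<le> 2 powr (real L * R / real N) + 1" for L
    using assms(3)[of L] of_int_ceiling_le_add_one[of "2 powr (real L * R / real N)"] by simp
  have M_pos: "M L > 0" for L
    using assms(3)[of L] by simp
  have "0 < \<delta>" "\<delta> < a - 1 / 2"
    using a by (simp_all add: \<delta>_def)
  from eventually_success_prob_ge[OF this M_pos assms(5)]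
  have lower: "eventually (\<lambda>L. 1 - err L \<le> success_prob N (M L) L (K L)) sequentially"
    unfolding err_def .
  have "(\<lambda>L. 1 / (\<delta> ^ 2 * real L)) \<longlonglongrightarrow> 0"
    using lim_const_over_n[of "1 / \<delta> ^ 2"] by simp
  moreover have "(\<lambda>L. real N * real (M L) * a ^ K L) \<longlonglongrightarrow> 0"
    using a ln_a assms(1,5) M_le by (intro codeword_count_mult_power_tendsto_zero) auto
  ultimately have "(\<lambda>L. 1 - err L) \<longlonglongrightarrow> 1 - (0 + 0)"
    unfolding err_def by (intro tendsto_intros)
  moreover have "eventually (\<lambda>L. success_prob N (M L) L (K L) \<le> 1) sequentially"
    by (simp add: success_prob_def)
  ultimately show ?thesis
    using tendsto_sandwich[OF lower] by simp
qed

end
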